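(* Let $\rho(\mathbf{x})\in[0,1]$ be the responsiveness of a prediction at $\mathbf{x}$ and fix $\varepsilon\in(0,1)$ and $\alpha\in(0,1)$. Consider testing $H_0:\rho(\mathbf{x})\ge\varepsilon$ versus $H_1:\rho(\mathbf{x})<\varepsilon$ using $n$ i.i.d. reachable points, with empirical responsiveness $\hat\rho_n\in\{0,1/n,\dots,1\}$, by rejecting $H_0$ iff $\mathsf{B}_{1-\alpha}(n\hat\rho_n+1,\ n-n\hat\rho_n)<\varepsilon$, where $\mathsf{B}_q(a,b)$ is the $q$-th quantile of the Beta$(a,b)$ distribution. Then rejecting $H_0$ implies $$n>\frac{\log\alpha}{\log(1-\varepsilon)}.$$
   Context: The responsiveness is $\rho(\mathbf{x})=\Pr[f(\mathbf{x}')\in\mathcal{Y}_T(\mathbf{x})]$ for $\mathbf{x}'$ drawn from a distribution $\mathbb{P}^{\mathrm{reach}}_{\mathbf{x}}$ over points reachable from $\mathbf{x}$ under interventions, where $f$ is a model and $\mathcal{Y}_T(\mathbf{x})$ a target prediction set; $\hat\rho_n$ is the fraction of the $n$ sampled points whose prediction lies in $\mathcal{Y}_T(\mathbf{x})$. A Beta distribution with second parameter $0$ is the point mass at $1$. *)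

theory Defs
  imports "HOL-Analysis.Analysis"
begin

definition beta_density :: "real \<Rightarrow> real \<Rightarrow> real \<Rightarrow> real" where
  "beta_density a b s =
     (if 0 < s \<and> s < 1 then s powr (a - 1) * (1 - s) powr (b - 1) / Beta a b else 0)"

text \<open>CDF of Beta(a,b). For b = 0 the distribution is, by convention, the point mass at 1.\<close>
definition beta_cdf :: "real \<Rightarrow> real \<Rightarrow> real \<Rightarrow> real" where
  "beta_cdf a b t =
     (if b = 0 then (if 1 \<le> t then 1 else 0)
      else (LINT s|lborel. indicator {..t} s * beta_density a b s))"

definition beta_quantile :: "real \<Rightarrow> real \<Rightarrow> real \<Rightarrow> real" where
  "beta_quantile q a b = Inf {t. q \<le> beta_cdf a b t}"

end

theory Submission
  imports Defs
begin

text \<open>For \<open>a \<ge> 1\<close> the kernel \<open>s powr (a - 1) * (1 - s) powr (b - 1)\<close> dominates its shift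
  \<open>(s - t) powr (a - 1) * (1 - s) powr (b - 1)\<close> on \<open>[t, 1]\<close>, whose integral is
  \<open>(1 - t) powr (a + b - 1) * Beta a b\<close> by an affine change of variables. Hence the Beta(a,b)
  CDF at \<open>t\<close> is at most \<open>1 - (1 - t) powr (a + b - 1)\<close>; this also holds for the point mass
  \<open>b = 0\<close>. For \<open>a = k + 1\<close>, \<open>b = n - k\<close> the exponent is \<open>n\<close>, so a \<open>(1 - \<alpha>)\<close>-quantile below
  \<open>\<epsilon>\<close> provides some \<open>t < \<epsilon>\<close> with \<open>(1 - t)^n \<le> \<alpha>\<close>, i.e. \<open>(1 - \<epsilon>)^n < \<alpha>\<close>; taking logarithms
  gives the bound on \<open>n\<close>.\<close>

lemma lborel_integral_eq_if_has_integral: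
  fixes f :: "'a::euclidean_space \<Rightarrow> real"
  assumes "f \<in> borel_measurable borel" "\<And>x. 0 \<le> f x" "(f has_integral I) UNIV"
  shows "(LINT x|lborel. f x) = I"
  using integral_eq_nn_integral[of f lborel] nn_integral_has_integral_lborel[OF assms]
    has_integral_nonneg[OF assms(3)] assms(1,2)
  by simp

lemma beta_cdf_nonpos:
  assumes "t \<le> 0"
  shows "beta_cdf a b t = 0"
proof -
  have "(\<lambda>s. indicator {..t} s * beta_density a b s) = (\<lambda>s. 0)"
    using assms by (auto simp: beta_density_def indicator_def fun_eq_iff)
  then show ?thesis
    using assms by (simp add: beta_cdf_def)
qed

lemma beta_cdf_eq_integral:
  assumes "a > 0" "b > 0" "0 \<le> t" "t \<le> 1"
  shows "beta_cdf a b t = integral {0..t} (\<lambda>s. s powr (a - 1) * (1 - s) powr (b - 1)) / Beta a b"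
proof -
  define \<phi> where "\<phi> = (\<lambda>s::real. s powr (a - 1) * (1 - s) powr (b - 1))"
  have "\<phi> integrable_on {0..1}"
    using has_integral_Beta_real[OF assms(1,2)] by (auto simp: \<phi>_def)
  then have "\<phi> integrable_on {0..t}"
    using integrable_subinterval_real assms(3,4) by fastforce
  then have "((\<lambda>s. if s \<in> {0..t} then \<phi> s / Beta a b else 0)
               has_integral integral {0..t} \<phi> / Beta a b) UNIV"
    by (subst has_integral_restrict_UNIV) (intro has_integral_divide integrable_integral)
  moreover have "(\<lambda>s. if s \<in> {0..t} then \<phi> s / Beta a b else 0) \<in> borel_measurable borel"
    unfolding \<phi>_def by measurable
  moreover have "Beta a b > 0"
    using assms(1,2) by (simp add: Beta_def Gamma_real_pos)
  ultimately have "(LINT s|lborel. (if s \<in> {0..t} then \<phi> s / Beta a b else 0))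
                     = integral {0..t} \<phi> / Beta a b"
    by (intro lborel_integral_eq_if_has_integral) (auto simp: \<phi>_def)
  moreover have "(\<lambda>s. indicator {..t} s * beta_density a b s)
                   = (\<lambda>s. if s \<in> {0..t} then \<phi> s / Beta a b else 0)"
    using assms(3,4) by (auto simp: fun_eq_iff beta_density_def \<phi>_def indicator_def)
  ultimately show ?thesis
    using assms(2) by (simp add: beta_cdf_def \<phi>_def)
qed

lemma has_integral_Beta_real_interval:
  fixes a b c d :: real
  assumes "a > 0" "b > 0" "c < d"
  shows "((\<lambda>s. (s - c) powr (a - 1) * (d - s) powr (b - 1)) has_integral
            (d - c) powr (a + b - 1) * Beta a b) {c..d}"
proof -
  define \<phi> where "\<phi> = (\<lambda>s::real. s powr (a - 1) * (1 - s) powr (b - 1))"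
  define l where "l = d - c"
  have l: "l > 0"
    using assms(3) by (simp add: l_def)
  have "((\<lambda>s. \<phi> ((1 / l) *\<^sub>R s + - c / l)) has_integral Beta a b /\<^sub>R (1 / l) ^ DIM(real))
          (cbox ((0 - - c / l) /\<^sub>R (1 / l)) ((1 - - c / l) /\<^sub>R (1 / l)))"
    using has_integral_Beta_real[OF assms(1,2)] l
    by (intro has_integral_affinity') (simp_all add: \<phi>_def)
  moreover have "(0 - - c / l) /\<^sub>R (1 / l) = c" "(1 - - c / l) /\<^sub>R (1 / l) = d"
    "Beta a b /\<^sub>R (1 / l) ^ DIM(real) = l * Beta a b"
    "\<And>s. (1 / l) *\<^sub>R s + - c / l = (s - c) / l"
    using l by (simp_all add: field_simps) (simp add: l_def algebra_simps)
  ultimately have "((\<lambda>s. \<phi> ((s - c) / l)) has_integral l * Beta a b) {c..d}"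
    by simp
  then have scaled: "((\<lambda>s. l powr (a + b - 2) * \<phi> ((s - c) / l)) has_integral
               l powr (a + b - 2) * (l * Beta a b)) {c..d}"
    by (rule has_integral_mult_right)
  have powr_combine: "l powr (a + b - 2) * (l * Beta a b) = l powr (a + b - 1) * Beta a b"
    using l by (simp add: powr_diff power2_eq_square)
  have pointwise: "l powr (a + b - 2) * \<phi> ((s - c) / l) = (s - c) powr (a - 1) * (d - s) powr (b - 1)"
    if "s \<in> {c..d}" for s
  proof -
    have "1 - (s - c) / l = (d - s) / l"
      using l by (simp add: l_def field_simps)
    then have "\<phi> ((s - c) / l) = (s - c) powr (a - 1) * (d - s) powr (b - 1) / l powr (a + b - 2)"
      using that l by (simp add: \<phi>_def powr_divide powr_add[symmetric])
    then show ?thesis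
      using l by simp
  qed
  have "((\<lambda>s. (s - c) powr (a - 1) * (d - s) powr (b - 1)) has_integral
           l powr (a + b - 1) * Beta a b) {c..d}"
    using has_integral_eq[OF pointwise scaled] unfolding powr_combine .
  then show ?thesis
    by (simp add: l_def)
qed

lemma Beta_tail_integral_ge:
  fixes a b t :: real
  assumes "a \<ge> 1" "b > 0" "0 \<le> t" "t < 1"
  shows "(1 - t) powr (a + b - 1) * Beta a b
           \<le> integral {t..1} (\<lambda>s. s powr (a - 1) * (1 - s) powr (b - 1))"
proof (rule has_integral_le)
  show "((\<lambda>s. (s - t) powr (a - 1) * (1 - s) powr (b - 1)) has_integral
           (1 - t) powr (a + b - 1) * Beta a b) {t..1}"
    using has_integral_Beta_real_interval[of a b t 1] assms by simp
  have "(\<lambda>s. s powr (a - 1) * (1 - s) powr (b - 1)) integrable_on {0..1}"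
    using has_integral_Beta_real[of a b] assms(1,2) by (auto simp: has_integral_integrable)
  then have "(\<lambda>s. s powr (a - 1) * (1 - s) powr (b - 1)) integrable_on {t..1}"
    by (rule integrable_subinterval_real) (use assms(3) in auto)
  then show "((\<lambda>s. s powr (a - 1) * (1 - s) powr (b - 1)) has_integral
               integral {t..1} (\<lambda>s. s powr (a - 1) * (1 - s) powr (b - 1))) {t..1}"
    by (rule integrable_integral)
  show "(s - t) powr (a - 1) * (1 - s) powr (b - 1) \<le> s powr (a - 1) * (1 - s) powr (b - 1)"
    if "s \<in> {t..1}" for s
    using that assms by (intro mult_right_mono powr_mono2) auto
qed

lemma beta_cdf_le:
  assumes "a \<ge> 1" "b \<ge> 0" "0 \<le> t" "t < 1"
  shows "beta_cdf a b t \<le> 1 - (1 - t) powr (a + b - 1)"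
proof (cases "b = 0")
  case True
  have "(1 - t) powr (a - 1) \<le> 1"
    using assms(1,3,4) by (intro powr_le1) auto
  then show ?thesis
    using True assms(4) by (simp add: beta_cdf_def)
next
  case False
  define \<phi> where "\<phi> = (\<lambda>s::real. s powr (a - 1) * (1 - s) powr (b - 1))"
  have b: "b > 0"
    using assms(2) False by simp
  have Beta: "(\<phi> has_integral Beta a b) {0..1}"
    using has_integral_Beta_real[of a b] assms(1) b by (simp add: \<phi>_def)
  have "integral {0..t} \<phi> + integral {t..1} \<phi> = integral {0..1} \<phi>"
    using Henstock_Kurzweil_Integration.integral_combine[OF _ _ has_integral_integrable[OF Beta]]
      assms(3,4)
    by simp
  moreover have "(1 - t) powr (a + b - 1) * Beta a b \<le> integral {t..1} \<phi>"
    unfolding \<phi>_def using Beta_tail_integral_ge[OF assms(1) b assms(3,4)] .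
  ultimately have "integral {0..t} \<phi> \<le> (1 - (1 - t) powr (a + b - 1)) * Beta a b"
    using integral_unique[OF Beta] by (simp add: left_diff_distrib)
  moreover have "Beta a b > 0"
    using assms(1) b by (simp add: Beta_def Gamma_real_pos)
  ultimately show ?thesis
    using beta_cdf_eq_integral[of a b t] assms b by (simp add: \<phi>_def pos_divide_le_eq)
qed

lemma beta_cdf_one:
  assumes "a > 0" "b \<ge> 0"
  shows "beta_cdf a b 1 = 1"
proof (cases "b = 0")
  case False
  then have "b > 0"
    using assms(2) by simp
  moreover have "Beta a b > 0"
    using assms(1) \<open>b > 0\<close> by (simp add: Beta_def Gamma_real_pos)
  ultimately show ?thesis
    using beta_cdf_eq_integral[of a b 1] integral_unique[OF has_integral_Beta_real] assms(1)
    by simp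
qed (simp add: beta_cdf_def)

lemma beta_quantile_less_imp_powr_less:
  assumes "a \<ge> 1" "b \<ge> 0" "a + b > 1" "0 \<le> \<alpha>" "\<alpha> < 1" "\<epsilon> \<le> 1"
    and "beta_quantile (1 - \<alpha>) a b < \<epsilon>"
  shows "(1 - \<epsilon>) powr (a + b - 1) < \<alpha>"
proof -
  \<comment> \<open>Nonemptiness matters: \<open>Inf {}\<close> on the reals is an unspecified value.\<close>
  have "1 \<in> {t. 1 - \<alpha> \<le> beta_cdf a b t}"
    using beta_cdf_one[of a b] assms(1,2,4) by simp
  then obtain t where t: "1 - \<alpha> \<le> beta_cdf a b t" "t < \<epsilon>"
    using cInf_lessD[of "{t. 1 - \<alpha> \<le> beta_cdf a b t}" \<epsilon>] assms(7)
    by (auto simp: beta_quantile_def)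
  have "t > 0"
    using beta_cdf_nonpos[of t a b] t(1) assms(5) by (cases "t > 0") auto
  then have "(1 - t) powr (a + b - 1) \<le> \<alpha>"
    using beta_cdf_le[of a b t] t assms(1,2,6) by simp
  moreover have "(1 - \<epsilon>) powr (a + b - 1) < (1 - t) powr (a + b - 1)"
    using t(2) assms(3,6) by (intro powr_less_mono2) auto
  ultimately show ?thesis
    by simp
qed

theorem mainTheorem3:
  fixes n :: nat and rho_hat \<epsilon> \<alpha> :: real
  assumes "n > 0"
    and "rho_hat \<in> {real k / real n | k. k \<le> n}"
    and "0 < \<epsilon>" "\<epsilon> < 1"
    and "0 < \<alpha>" "\<alpha> < 1"
    and "beta_quantile (1 - \<alpha>) (real n * rho_hat + 1) (real n - real n * rho_hat) < \<epsilon>"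
  shows "real n > ln \<alpha> / ln (1 - \<epsilon>)"
proof -
  obtain k where k: "k \<le> n" "rho_hat = real k / real n"
    using assms(2) by blast
  then have "real n * rho_hat = real k"
    using assms(1) by simp
  then have "beta_quantile (1 - \<alpha>) (real k + 1) (real n - real k) < \<epsilon>"
    using assms(7) by simp
  then have "(1 - \<epsilon>) powr (real k + 1 + (real n - real k) - 1) < \<alpha>"
    by (rule beta_quantile_less_imp_powr_less[rotated 6]) (use assms(1,4,5,6) k(1) in auto)
  then have "(1 - \<epsilon>) powr real n < \<alpha>"
    by simp
  then have "ln ((1 - \<epsilon>) powr real n) < ln \<alpha>"
    using assms(4,5) by (subst ln_less_cancel_iff) auto
  then have "real n * ln (1 - \<epsilon>) < ln \<alpha>"
    using assms(4) by simp
  moreover have "ln (1 - \<epsilon>) < 0"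
    using assms(3,4) by simp
  ultimately show ?thesis
    by (simp add: neg_divide_less_eq mult.commute)
qed

end
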